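(* Let $k\ge1$ and let $(A,t)$ be a nontrivial $\mathcal{C}_k$-algebra. The following are equivalent: (i) $(A,t)$ is a simple algebra; (ii) for every $a\in A$ with $a\neq1$, $\bigwedge_{j=1}^{k}t^j(\triangle a)=0$; (iii) $K(A)=\{0,1\}$, where $K(A)=\{x\in A: t(x)=x=\nabla x\}$.
   Context: A modal pseudocomplemented De Morgan algebra ($mpM$-algebra) is an algebra $\langle A,\wedge,\vee,\sim,{}^\ast,0,1\rangle$ such that $\langle A,\wedge,\vee,\sim,0,1\rangle$ is a De Morgan algebra (bounded distributive lattice with $\sim\sim x=x$, $\sim(x\vee y)=\sim x\wedge\sim y$), $x^\ast$ is the pseudocomplement of $x$, and $x\vee\sim x\le x\vee x^\ast$. Put $\nabla x=\sim(\sim x\wedge x^\ast)$, $\triangle x=\sim\nabla\sim x$. A $\mathcal{C}_k$-algebra ($k\ge1$) is a pair $(A,t)$ with $A$ an $mpM$-algebra and $t$ an $mpM$-automorphism of $A$ with $t^k=\mathrm{id}$; simplicity refers to the signature $(\wedge,\vee,\sim,{}^\ast,t,0,1)$. *)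

theory Defs
  imports Main
begin

text \<open>An algebra of signature (meet, join, neg, pc, 0, 1) whose universe is the whole type 'a.\<close>

record 'a mpm_ops =
  mt  :: "'a \<Rightarrow> 'a \<Rightarrow> 'a"
  jn  :: "'a \<Rightarrow> 'a \<Rightarrow> 'a"
  ng  :: "'a \<Rightarrow> 'a"
  pc  :: "'a \<Rightarrow> 'a"
  bt  :: "'a"
  tp  :: "'a"

definition leq :: "'a mpm_ops \<Rightarrow> 'a \<Rightarrow> 'a \<Rightarrow> bool" where
  "leq A x y \<longleftrightarrow> mt A x y = x"

definition bdl :: "'a mpm_ops \<Rightarrow> bool" where
  "bdl A \<longleftrightarrow>
     (\<forall>x y z. mt A x (mt A y z) = mt A (mt A x y) z) \<and>
     (\<forall>x y z. jn A x (jn A y z) = jn A (jn A x y) z) \<and>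
     (\<forall>x y. mt A x y = mt A y x) \<and>
     (\<forall>x y. jn A x y = jn A y x) \<and>
     (\<forall>x y. mt A x (jn A x y) = x) \<and>
     (\<forall>x y. jn A x (mt A x y) = x) \<and>
     (\<forall>x y z. mt A x (jn A y z) = jn A (mt A x y) (mt A x z)) \<and>
     (\<forall>x. mt A x (bt A) = bt A) \<and>
     (\<forall>x. jn A x (tp A) = tp A)"

definition demorgan_alg :: "'a mpm_ops \<Rightarrow> bool" where
  "demorgan_alg A \<longleftrightarrow> bdl A \<and>
     (\<forall>x. ng A (ng A x) = x) \<and>
     (\<forall>x y. ng A (jn A x y) = mt A (ng A x) (ng A y))"

definition is_pseudocomplement :: "'a mpm_ops \<Rightarrow> bool" where
  "is_pseudocomplement A \<longleftrightarrow>
     (\<forall>x. mt A x (pc A x) = bt A \<and> (\<forall>y. mt A x y = bt A \<longrightarrow> leq A y (pc A x)))"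

definition mpM_alg :: "'a mpm_ops \<Rightarrow> bool" where
  "mpM_alg A \<longleftrightarrow> demorgan_alg A \<and> is_pseudocomplement A \<and>
     (\<forall>x. leq A (jn A x (ng A x)) (jn A x (pc A x)))"

definition nabla :: "'a mpm_ops \<Rightarrow> 'a \<Rightarrow> 'a" where
  "nabla A x = ng A (mt A (ng A x) (pc A x))"

definition delta :: "'a mpm_ops \<Rightarrow> 'a \<Rightarrow> 'a" where
  "delta A x = ng A (nabla A (ng A x))"

definition mpM_automorphism :: "'a mpm_ops \<Rightarrow> ('a \<Rightarrow> 'a) \<Rightarrow> bool" where
  "mpM_automorphism A t \<longleftrightarrow> bij t \<and>
     (\<forall>x y. t (mt A x y) = mt A (t x) (t y)) \<and>
     (\<forall>x y. t (jn A x y) = jn A (t x) (t y)) \<and>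
     (\<forall>x. t (ng A x) = ng A (t x)) \<and>
     (\<forall>x. t (pc A x) = pc A (t x)) \<and>
     t (bt A) = bt A \<and> t (tp A) = tp A"

definition Ck_alg :: "nat \<Rightarrow> 'a mpm_ops \<Rightarrow> ('a \<Rightarrow> 'a) \<Rightarrow> bool" where
  "Ck_alg k A t \<longleftrightarrow> k \<ge> 1 \<and> mpM_alg A \<and> mpM_automorphism A t \<and> (t ^^ k) = id"

definition Ck_congruence :: "'a mpm_ops \<Rightarrow> ('a \<Rightarrow> 'a) \<Rightarrow> 'a rel \<Rightarrow> bool" where
  "Ck_congruence A t \<theta> \<longleftrightarrow> equiv UNIV \<theta> \<and>
     (\<forall>x y u v. (x, y) \<in> \<theta> \<longrightarrow> (u, v) \<in> \<theta> \<longrightarrow> (mt A x u, mt A y v) \<in> \<theta>) \<and>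
     (\<forall>x y u v. (x, y) \<in> \<theta> \<longrightarrow> (u, v) \<in> \<theta> \<longrightarrow> (jn A x u, jn A y v) \<in> \<theta>) \<and>
     (\<forall>x y. (x, y) \<in> \<theta> \<longrightarrow> (ng A x, ng A y) \<in> \<theta>) \<and>
     (\<forall>x y. (x, y) \<in> \<theta> \<longrightarrow> (pc A x, pc A y) \<in> \<theta>) \<and>
     (\<forall>x y. (x, y) \<in> \<theta> \<longrightarrow> (t x, t y) \<in> \<theta>)"

definition Ck_simple :: "'a mpm_ops \<Rightarrow> ('a \<Rightarrow> 'a) \<Rightarrow> bool" where
  "Ck_simple A t \<longleftrightarrow> (\<exists>x y::'a. x \<noteq> y) \<and>
     (\<forall>\<theta>. Ck_congruence A t \<theta> \<longrightarrow> \<theta> = Id \<or> \<theta> = UNIV)"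

fun big_meet :: "'a mpm_ops \<Rightarrow> (nat \<Rightarrow> 'a) \<Rightarrow> nat \<Rightarrow> 'a" where
  "big_meet A f 0 = tp A"
| "big_meet A f (Suc n) = mt A (big_meet A f n) (f (Suc n))"

definition K_set :: "'a mpm_ops \<Rightarrow> ('a \<Rightarrow> 'a) \<Rightarrow> 'a set" where
  "K_set A t = {x. t x = x \<and> x = nabla A x}"

end

theory Submission
  imports Defs
begin

(* Meeting with a Boolean element m (one with m \<sqinter> \<sim>m = 0) is a congruence of the
   mpM-reduct, and it also respects t when t m = m. For a \<noteq> 1 the element
   m = \<Sqinter>{j=1..k} t^j(\<Delta>a) is Boolean, t-invariant (t permutes the meetands cyclically
   because t^k = id) and different from 1, so it lies in K(A); conversely each x in K(A)
   arises this way from a = x. This gives (ii) \<longleftrightarrow> (iii), and (i) \<longrightarrow> (ii) by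
   applying simplicity to the congruence induced by m.
   For (ii) \<longrightarrow> (i), Moisil's determination principle (u \<le> v, \<Delta>u = \<Delta>v, \<nabla>u = \<nabla>v
   imply u = v) shows that a congruence identifying two distinct elements identifies
   two Boolean elements p < q. Then e = p \<squnion> \<sim>q \<noteq> 1 is congruent to 1, hence so is the
   orbit meet of \<Delta>e, which is 0 by (ii). *)

lemma
  assumes "Ck_congruence A t \<theta>"
  shows Ck_congruence_refl: "(x, x) \<in> \<theta>"
    and Ck_congruence_sym: "(x, y) \<in> \<theta> \<Longrightarrow> (y, x) \<in> \<theta>"
    and Ck_congruence_trans: "(x, y) \<in> \<theta> \<Longrightarrow> (y, z) \<in> \<theta> \<Longrightarrow> (x, z) \<in> \<theta>"
    and Ck_congruence_mt: "(x, y) \<in> \<theta> \<Longrightarrow> (u, v) \<in> \<theta> \<Longrightarrow> (mt A x u, mt A y v) \<in> \<theta>"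
    and Ck_congruence_jn: "(x, y) \<in> \<theta> \<Longrightarrow> (u, v) \<in> \<theta> \<Longrightarrow> (jn A x u, jn A y v) \<in> \<theta>"
    and Ck_congruence_ng: "(x, y) \<in> \<theta> \<Longrightarrow> (ng A x, ng A y) \<in> \<theta>"
    and Ck_congruence_pc: "(x, y) \<in> \<theta> \<Longrightarrow> (pc A x, pc A y) \<in> \<theta>"
    and Ck_congruence_t: "(x, y) \<in> \<theta> \<Longrightarrow> (t x, t y) \<in> \<theta>"
proof -
  note cong = assms[unfolded Ck_congruence_def]
  then have eq: "equiv UNIV \<theta>" by simp
  show "(x, x) \<in> \<theta>" using eq by (simp add: equiv_def refl_on_def)
  show "(x, y) \<in> \<theta> \<Longrightarrow> (y, x) \<in> \<theta>" using eq by (meson equivE symD)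
  show "(x, y) \<in> \<theta> \<Longrightarrow> (y, z) \<in> \<theta> \<Longrightarrow> (x, z) \<in> \<theta>" using eq by (meson equivE transD)
  show "(x, y) \<in> \<theta> \<Longrightarrow> (u, v) \<in> \<theta> \<Longrightarrow> (mt A x u, mt A y v) \<in> \<theta>"
    "(x, y) \<in> \<theta> \<Longrightarrow> (u, v) \<in> \<theta> \<Longrightarrow> (jn A x u, jn A y v) \<in> \<theta>"
    "(x, y) \<in> \<theta> \<Longrightarrow> (ng A x, ng A y) \<in> \<theta>" "(x, y) \<in> \<theta> \<Longrightarrow> (pc A x, pc A y) \<in> \<theta>"
    "(x, y) \<in> \<theta> \<Longrightarrow> (t x, t y) \<in> \<theta>"
    using cong by simp_all
qed

lemma
  assumes cong: "Ck_congruence A t \<theta>" and "(x, y) \<in> \<theta>"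
  shows Ck_congruence_nabla: "(nabla A x, nabla A y) \<in> \<theta>"
    and Ck_congruence_delta: "(delta A x, delta A y) \<in> \<theta>"
    and Ck_congruence_funpow: "((t ^^ j) x, (t ^^ j) y) \<in> \<theta>"
proof -
  have nabla: "(nabla A x, nabla A y) \<in> \<theta>" if "(x, y) \<in> \<theta>" for x y
    unfolding nabla_def
    by (intro Ck_congruence_ng[OF cong] Ck_congruence_mt[OF cong] Ck_congruence_pc[OF cong] that)
  show "(nabla A x, nabla A y) \<in> \<theta>" using nabla assms(2) .
  show "(delta A x, delta A y) \<in> \<theta>"
    unfolding delta_def by (intro Ck_congruence_ng[OF cong] nabla assms(2))
  show "((t ^^ j) x, (t ^^ j) y) \<in> \<theta>"
    by (induction j) (simp_all add: assms(2) Ck_congruence_t[OF cong])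
qed

lemma Ck_congruence_big_meet:
  assumes cong: "Ck_congruence A t \<theta>" and "\<And>j. (f j, g j) \<in> \<theta>"
  shows "(big_meet A f n, big_meet A g n) \<in> \<theta>"
  by (induction n) (simp_all add: assms Ck_congruence_refl[OF cong] Ck_congruence_mt[OF cong])

locale mpm_algebra =
  fixes A :: "'a mpm_ops"
  assumes mpM: "mpM_alg A"
begin

abbreviation meet (infixl "\<sqinter>" 70) where "x \<sqinter> y \<equiv> mt A x y"
abbreviation join (infixl "\<squnion>" 65) where "x \<squnion> y \<equiv> jn A x y"
abbreviation below (infix "\<preceq>" 50) where "x \<preceq> y \<equiv> leq A x y"
abbreviation neg ("\<sim>_" [80] 80) where "\<sim>x \<equiv> ng A x"
abbreviation pcomp ("_\<^sup>\<star>" [1000] 999) where "x\<^sup>\<star> \<equiv> pc A x"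
abbreviation zero ("\<zero>") where "\<zero> \<equiv> bt A"
abbreviation one ("\<one>") where "\<one> \<equiv> tp A"

lemma bdl: "bdl A"
  using mpM by (simp add: mpM_alg_def demorgan_alg_def)

lemma meet_assoc: "x \<sqinter> (y \<sqinter> z) = x \<sqinter> y \<sqinter> z"
  and join_assoc: "x \<squnion> (y \<squnion> z) = x \<squnion> y \<squnion> z"
  and meet_comm: "x \<sqinter> y = y \<sqinter> x"
  and join_comm: "x \<squnion> y = y \<squnion> x"
  and meet_join_absorb: "x \<sqinter> (x \<squnion> y) = x"
  and join_meet_absorb: "x \<squnion> (x \<sqinter> y) = x"
  and meet_join_distrib: "x \<sqinter> (y \<squnion> z) = x \<sqinter> y \<squnion> x \<sqinter> z"
  and meet_bot: "x \<sqinter> \<zero> = \<zero>"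
  and join_top: "x \<squnion> \<one> = \<one>"
  using bdl unfolding bdl_def by blast+

lemma meet_idem: "x \<sqinter> x = x"
  by (metis meet_join_absorb join_meet_absorb)

sublocale L: distrib_lattice "mt A" "leq A" "\<lambda>x y. x \<preceq> y \<and> x \<noteq> y" "jn A"
proof
  fix x y z
  show "(x \<preceq> y \<and> x \<noteq> y) = (x \<preceq> y \<and> \<not> y \<preceq> x)"
    unfolding leq_def by (metis meet_comm)
  show "x \<preceq> x" unfolding leq_def by (rule meet_idem)
  show "x \<preceq> y \<Longrightarrow> y \<preceq> z \<Longrightarrow> x \<preceq> z" unfolding leq_def by (metis meet_assoc)
  show "x \<preceq> y \<Longrightarrow> y \<preceq> x \<Longrightarrow> x = y" unfolding leq_def by (metis meet_comm)
  show "x \<sqinter> y \<preceq> x" unfolding leq_def by (metis meet_assoc meet_comm meet_idem)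
  show "x \<sqinter> y \<preceq> y" unfolding leq_def by (metis meet_assoc meet_idem)
  show "x \<preceq> y \<Longrightarrow> x \<preceq> z \<Longrightarrow> x \<preceq> y \<sqinter> z" unfolding leq_def by (metis meet_assoc)
  show "x \<preceq> x \<squnion> y" unfolding leq_def by (rule meet_join_absorb)
  show "y \<preceq> x \<squnion> y" unfolding leq_def by (metis join_comm meet_join_absorb)
  show "y \<preceq> x \<Longrightarrow> z \<preceq> x \<Longrightarrow> y \<squnion> z \<preceq> x"
    unfolding leq_def by (metis meet_comm meet_join_distrib)
  have "(x \<squnion> y) \<sqinter> (x \<squnion> z) = (x \<squnion> y) \<sqinter> x \<squnion> (x \<squnion> y) \<sqinter> z"
    by (rule meet_join_distrib)
  also have "\<dots> = x \<squnion> (z \<sqinter> x \<squnion> z \<sqinter> y)"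
    by (metis meet_comm meet_join_absorb meet_join_distrib)
  also have "\<dots> = x \<squnion> y \<sqinter> z"
    by (metis join_assoc join_meet_absorb meet_comm)
  finally show "x \<squnion> y \<sqinter> z = (x \<squnion> y) \<sqinter> (x \<squnion> z)" by simp
qed

sublocale L: bounded_lattice "mt A" "leq A" "\<lambda>x y. x \<preceq> y \<and> x \<noteq> y" "jn A" "bt A" "tp A"
proof
  fix x
  show "\<zero> \<preceq> x" unfolding leq_def by (metis meet_bot meet_comm)
  show "x \<preceq> \<one>" by (metis join_top L.sup_ge1)
qed

lemma demorgan: "demorgan_alg A" and pseudocomplement: "is_pseudocomplement A"
  using mpM by (simp_all add: mpM_alg_def)

lemma neg_neg [simp]: "\<sim>\<sim>x = x"
  and neg_join: "\<sim>(x \<squnion> y) = \<sim>x \<sqinter> \<sim>y"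
  using demorgan unfolding demorgan_alg_def by blast+

lemma neg_meet: "\<sim>(x \<sqinter> y) = \<sim>x \<squnion> \<sim>y"
  by (metis neg_neg neg_join)

lemma neg_antimono: "x \<preceq> y \<Longrightarrow> \<sim>y \<preceq> \<sim>x"
  by (metis L.sup.absorb_iff2 L.inf.absorb_iff2 neg_join)

lemma neg_top [simp]: "\<sim>\<one> = \<zero>"
  by (metis L.bot_unique L.top_greatest neg_antimono neg_neg)

lemma neg_bot [simp]: "\<sim>\<zero> = \<one>"
  by (metis neg_top neg_neg)

lemma meet_pc [simp]: "x \<sqinter> x\<^sup>\<star> = \<zero>"
  and pc_greatest: "x \<sqinter> y = \<zero> \<Longrightarrow> y \<preceq> x\<^sup>\<star>"
  using pseudocomplement unfolding is_pseudocomplement_def by blast+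

lemma pc_antimono: "x \<preceq> y \<Longrightarrow> y\<^sup>\<star> \<preceq> x\<^sup>\<star>"
  by (metis L.inf_mono L.le_bot L.order_refl meet_pc pc_greatest)

lemma neg_le_join_pc: "\<sim>x \<preceq> x \<squnion> x\<^sup>\<star>"
  using mpM unfolding mpM_alg_def by (meson L.le_sup_iff)

lemma nabla_eq: "nabla A x = x \<squnion> \<sim>x\<^sup>\<star>"
  by (simp add: nabla_def neg_meet)

lemma delta_eq: "delta A x = x \<sqinter> (\<sim>x)\<^sup>\<star>"
  by (simp add: delta_def nabla_def)

definition is_boolean :: "'a \<Rightarrow> bool" where
  "is_boolean b \<longleftrightarrow> b \<sqinter> \<sim>b = \<zero> \<and> b \<squnion> \<sim>b = \<one>"

lemma is_boolean_bot: "is_boolean \<zero>" and is_boolean_top: "is_boolean \<one>"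
  by (simp_all add: is_boolean_def)

lemma is_boolean_neg: "is_boolean b \<Longrightarrow> is_boolean (\<sim>b)"
  unfolding is_boolean_def by (metis L.inf_commute L.sup_commute neg_neg)

lemma is_boolean_meet:
  assumes "is_boolean b" "is_boolean c"
  shows "is_boolean (b \<sqinter> c)"
proof -
  have b: "b \<sqinter> \<sim>b = \<zero>" "b \<squnion> \<sim>b = \<one>" and c: "c \<sqinter> \<sim>c = \<zero>" "c \<squnion> \<sim>c = \<one>"
    using assms unfolding is_boolean_def by auto
  have "b \<sqinter> c \<sqinter> (\<sim>b \<squnion> \<sim>c) = c \<sqinter> (b \<sqinter> \<sim>b) \<squnion> b \<sqinter> (c \<sqinter> \<sim>c)"
    by (metis L.inf_sup_distrib1 L.inf.assoc L.inf.left_commute)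
  moreover have "b \<sqinter> c \<squnion> (\<sim>b \<squnion> \<sim>c) = (\<sim>c \<squnion> (b \<squnion> \<sim>b)) \<sqinter> (\<sim>b \<squnion> (c \<squnion> \<sim>c))"
    by (metis L.sup_inf_distrib2 L.sup.commute L.sup.left_commute)
  ultimately show ?thesis
    unfolding is_boolean_def neg_meet using b c by simp
qed

lemma pc_is_boolean: 
  assumes "is_boolean b"
  shows "b\<^sup>\<star> = \<sim>b"
proof (rule L.order.antisym)
  have b: "b \<sqinter> \<sim>b = \<zero>" "b \<squnion> \<sim>b = \<one>" using assms unfolding is_boolean_def by auto
  have "b\<^sup>\<star> = b\<^sup>\<star> \<sqinter> (b \<squnion> \<sim>b)" using b(2) by simp
  also have "\<dots> = b\<^sup>\<star> \<sqinter> \<sim>b" by (metis L.inf_sup_distrib1 L.inf.commute L.sup_bot_left meet_pc)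
  finally show "b\<^sup>\<star> \<preceq> \<sim>b" by (metis L.inf_le2)
  show "\<sim>b \<preceq> b\<^sup>\<star>" using b(1) by (rule pc_greatest)
qed

lemma pc_meet_is_boolean:
  assumes "is_boolean m"
  shows "(x \<sqinter> m)\<^sup>\<star> = x\<^sup>\<star> \<squnion> \<sim>m"
proof (rule L.order.antisym)
  have m: "m \<sqinter> \<sim>m = \<zero>" "m \<squnion> \<sim>m = \<one>" using assms unfolding is_boolean_def by auto
  have "x \<sqinter> m \<sqinter> (x\<^sup>\<star> \<squnion> \<sim>m) = m \<sqinter> (x \<sqinter> x\<^sup>\<star>) \<squnion> x \<sqinter> (m \<sqinter> \<sim>m)"
    by (metis L.inf_sup_distrib1 L.inf.assoc L.inf.left_commute)
  then have "x \<sqinter> m \<sqinter> (x\<^sup>\<star> \<squnion> \<sim>m) = \<zero>" using m by simp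
  then show "x\<^sup>\<star> \<squnion> \<sim>m \<preceq> (x \<sqinter> m)\<^sup>\<star>" by (rule pc_greatest)
  define z where "z = (x \<sqinter> m)\<^sup>\<star>"
  have "x \<sqinter> (z \<sqinter> m) = \<zero>" unfolding z_def by (metis L.inf.assoc L.inf.commute meet_pc)
  then have "z \<sqinter> m \<preceq> x\<^sup>\<star>" by (rule pc_greatest)
  moreover have "z = z \<sqinter> m \<squnion> z \<sqinter> \<sim>m" using m(2) by (metis L.inf_sup_distrib1 L.inf_top_right)
  ultimately show "z \<preceq> x\<^sup>\<star> \<squnion> \<sim>m" by (metis L.inf_le2 L.sup_mono)
qed

lemma is_boolean_nabla: "is_boolean (nabla A x)"
proof -
  have "x \<sqinter> (\<sim>x \<sqinter> x\<^sup>\<star>) = \<zero>"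
    by (metis L.inf.left_commute meet_pc L.inf_bot_right)
  moreover have "\<sim>x\<^sup>\<star> \<sqinter> (\<sim>x \<sqinter> x\<^sup>\<star>) = \<zero>"
  proof -
    have "\<sim>x \<sqinter> \<sim>x\<^sup>\<star> \<preceq> x" by (metis neg_le_join_pc neg_antimono neg_join neg_neg)
    then have "\<sim>x \<sqinter> \<sim>x\<^sup>\<star> \<sqinter> x\<^sup>\<star> \<preceq> x \<sqinter> x\<^sup>\<star>" by (rule L.inf_mono) simp
    then show ?thesis by (metis L.inf.assoc L.inf.commute L.le_bot meet_pc)
  qed
  ultimately have "nabla A x \<sqinter> \<sim>nabla A x = \<zero>"
    unfolding nabla_eq neg_join neg_neg by (simp add: L.inf_sup_distrib2)
  moreover from this have "nabla A x \<squnion> \<sim>nabla A x = \<one>"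
    by (metis neg_meet neg_bot neg_neg L.sup.commute)
  ultimately show ?thesis unfolding is_boolean_def by simp
qed

lemma is_boolean_delta: "is_boolean (delta A x)"
  unfolding delta_def by (intro is_boolean_neg is_boolean_nabla)

lemma nabla_is_boolean: "is_boolean b \<Longrightarrow> nabla A b = b"
  by (simp add: nabla_eq pc_is_boolean)

lemma delta_is_boolean: "is_boolean b \<Longrightarrow> delta A b = b"
  by (simp add: delta_eq pc_is_boolean is_boolean_neg)

lemma boolean_less_join_neg_ne_top:
  assumes "is_boolean p" "is_boolean q" "p \<preceq> q" "p \<noteq> q"
  shows "p \<squnion> \<sim>q \<noteq> \<one>"
proof
  assume "p \<squnion> \<sim>q = \<one>"
  then have "q = q \<sqinter> (p \<squnion> \<sim>q)" by simp
  also have "\<dots> = q \<sqinter> p"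
    using \<open>is_boolean q\<close> by (simp add: is_boolean_def L.inf_sup_distrib1)
  also have "\<dots> = p" using \<open>p \<preceq> q\<close> by (simp add: L.inf.absorb2)
  finally show False using \<open>p \<noteq> q\<close> by simp
qed

lemma nabla_mono: "x \<preceq> y \<Longrightarrow> nabla A x \<preceq> nabla A y"
  unfolding nabla_eq by (meson L.sup_mono neg_antimono pc_antimono)

lemma delta_mono: "x \<preceq> y \<Longrightarrow> delta A x \<preceq> delta A y"
  unfolding delta_eq by (meson L.inf_mono neg_antimono pc_antimono)

lemma delta_le: "delta A x \<preceq> x"
  by (simp add: delta_eq)

lemma delta_eq_topD: "delta A x = \<one> \<Longrightarrow> x = \<one>"
  by (metis delta_le L.top_unique)

lemma join_delta_decomp: "x = x \<sqinter> \<sim>x \<squnion> delta A x"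
proof -
  have "x \<preceq> \<sim>x \<squnion> (\<sim>x)\<^sup>\<star>" using neg_le_join_pc[of "\<sim>x"] by simp
  then have "x = x \<sqinter> (\<sim>x \<squnion> (\<sim>x)\<^sup>\<star>)" by (simp add: L.inf.absorb1)
  also have "\<dots> = x \<sqinter> \<sim>x \<squnion> delta A x" by (simp add: delta_eq L.inf_sup_distrib1)
  finally show ?thesis .
qed

lemma meet_nabla_decomp: "x = (x \<squnion> \<sim>x) \<sqinter> nabla A x"
proof -
  have "x = \<sim>(\<sim>x \<sqinter> x \<squnion> delta A (\<sim>x))" using join_delta_decomp[of "\<sim>x"] by simp
  also have "\<dots> = (x \<squnion> \<sim>x) \<sqinter> nabla A x"
    by (simp add: neg_join neg_meet delta_def L.sup.commute L.inf.commute)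
  finally show ?thesis .
qed

lemma eq_if_delta_nabla_eq:
  assumes "u \<preceq> v" "delta A u = delta A v" "nabla A u = nabla A v"
  shows "u = v"
proof (rule L.order.antisym[OF assms(1)])
  have "v \<sqinter> \<sim>v \<preceq> u \<squnion> \<sim>u"
    using neg_antimono[OF assms(1)] by (meson L.inf_le2 L.le_supI2 L.order_trans)
  moreover have "v \<sqinter> \<sim>v \<preceq> nabla A u"
    using assms(3) meet_nabla_decomp[of v] by (metis L.inf_le1 L.inf_le2 L.order_trans)
  ultimately have "v \<sqinter> \<sim>v \<preceq> u" using meet_nabla_decomp[of u] by (metis L.le_inf_iff)
  moreover have "delta A v \<preceq> u" using assms(2) delta_le by metis
  ultimately show "v \<preceq> u" using join_delta_decomp[of v] by (metis L.le_sup_iff)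
qed

lemma is_boolean_big_meet:
  "(\<And>j. 1 \<le> j \<Longrightarrow> j \<le> n \<Longrightarrow> is_boolean (f j)) \<Longrightarrow> is_boolean (big_meet A f n)"
  by (induction n) (auto simp: is_boolean_top intro!: is_boolean_meet)

lemma big_meet_le: "1 \<le> j \<Longrightarrow> j \<le> n \<Longrightarrow> big_meet A f n \<preceq> f j"
  by (induction n) (auto simp: le_Suc_eq intro: L.le_infI1)

lemma big_meet_const: "1 \<le> n \<Longrightarrow> big_meet A (\<lambda>j. x) n = x"
  by (induction n) (auto simp: le_Suc_eq)

lemma big_meet_rotate: "big_meet A (\<lambda>j. f (Suc j)) n \<sqinter> f 1 = big_meet A f (Suc n)"
proof (induction n)
  case (Suc n)
  have "big_meet A (\<lambda>j. f (Suc j)) (Suc n) \<sqinter> f 1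
      = big_meet A (\<lambda>j. f (Suc j)) n \<sqinter> f 1 \<sqinter> f (Suc (Suc n))"
    by (simp add: L.inf.assoc L.inf.commute L.inf.left_commute)
  then show ?case using Suc.IH by simp
qed simp

lemma Ck_congruence_UNIV_if_bot_top:
  assumes cong: "Ck_congruence A t \<theta>" and "(\<zero>, \<one>) \<in> \<theta>"
  shows "\<theta> = UNIV"
proof -
  have "(\<zero> \<sqinter> z, \<one> \<sqinter> z) \<in> \<theta>" for z
    using Ck_congruence_mt[OF cong \<open>(\<zero>, \<one>) \<in> \<theta>\<close> Ck_congruence_refl[OF cong]] .
  then have "(\<zero>, z) \<in> \<theta>" for z by simp
  then have "(x, y) \<in> \<theta>" for x y
    by (metis Ck_congruence_sym[OF cong] Ck_congruence_trans[OF cong])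
  then show ?thesis by auto
qed

lemma Ck_congruence_boolean_pair:
  assumes cong: "Ck_congruence A t \<theta>" and "\<theta> \<noteq> Id"
  obtains p q where "is_boolean p" "is_boolean q" "p \<preceq> q" "p \<noteq> q" "(p, q) \<in> \<theta>"
proof -
  obtain x y where xy: "(x, y) \<in> \<theta>" "x \<noteq> y"
    using \<open>\<theta> \<noteq> Id\<close> Ck_congruence_refl[OF cong] by auto
  have "(x \<sqinter> y, y \<sqinter> y) \<in> \<theta>" "(x \<squnion> y, y \<squnion> y) \<in> \<theta>"
    using Ck_congruence_mt[OF cong xy(1)] Ck_congruence_jn[OF cong xy(1)] Ck_congruence_refl[OF cong]
    by blast+
  then have uv: "(x \<sqinter> y, x \<squnion> y) \<in> \<theta>"
    by (metis L.inf.idem L.sup.idem Ck_congruence_sym[OF cong] Ck_congruence_trans[OF cong])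
  have le: "x \<sqinter> y \<preceq> x \<squnion> y" by (meson L.inf_le1 L.sup_ge1 L.order_trans)
  have "x \<sqinter> y \<noteq> x \<squnion> y"
  proof
    assume "x \<sqinter> y = x \<squnion> y"
    then have "x \<preceq> y" "y \<preceq> x"
      by (metis L.inf_le2 L.sup_ge1 L.order_trans, metis L.inf_le1 L.sup_ge2 L.order_trans)
    with xy(2) show False by (simp add: L.order.antisym)
  qed
  then consider "delta A (x \<sqinter> y) \<noteq> delta A (x \<squnion> y)" | "nabla A (x \<sqinter> y) \<noteq> nabla A (x \<squnion> y)"
    using eq_if_delta_nabla_eq[OF le] by blast
  then show ?thesis
  proof cases
    case 1
    show ?thesis
      by (rule that[OF is_boolean_delta is_boolean_delta delta_mono[OF le] 1
            Ck_congruence_delta[OF cong uv]])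
  next
    case 2
    show ?thesis
      by (rule that[OF is_boolean_nabla is_boolean_nabla nabla_mono[OF le] 2
            Ck_congruence_nabla[OF cong uv]])
  qed
qed

definition meet_cong :: "'a \<Rightarrow> 'a rel" where
  "meet_cong m = {(x, y). x \<sqinter> m = y \<sqinter> m}"

lemma Ck_congruence_meet_cong:
  assumes m: "is_boolean m" and tm: "t m = m" and t_meet: "\<And>x y. t (x \<sqinter> y) = t x \<sqinter> t y"
  shows "Ck_congruence A t (meet_cong m)"
  unfolding Ck_congruence_def
proof (intro conjI allI impI)
  show "equiv UNIV (meet_cong m)"
    unfolding meet_cong_def equiv_def refl_on_def sym_def trans_def by auto
  have meet_neg_m: "m \<sqinter> \<sim>m = \<zero>" using m by (simp add: is_boolean_def)
  fix x y assume "(x, y) \<in> meet_cong m"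
  then have xy: "x \<sqinter> m = y \<sqinter> m" by (simp add: meet_cong_def)
  {
    fix u v assume "(u, v) \<in> meet_cong m"
    then have uv: "u \<sqinter> m = v \<sqinter> m" by (simp add: meet_cong_def)
    have "x \<sqinter> u \<sqinter> m = (x \<sqinter> m) \<sqinter> (u \<sqinter> m)" "y \<sqinter> v \<sqinter> m = (y \<sqinter> m) \<sqinter> (v \<sqinter> m)"
      by (simp_all add: L.inf_aci)
    then show "(x \<sqinter> u, y \<sqinter> v) \<in> meet_cong m" using xy uv by (simp add: meet_cong_def)
    show "(x \<squnion> u, y \<squnion> v) \<in> meet_cong m"
      using xy uv by (simp add: meet_cong_def L.inf_sup_distrib2)
  }
  have "(w \<squnion> \<sim>m) \<sqinter> m = w \<sqinter> m" for w
    using meet_neg_m by (simp add: L.inf_sup_distrib2 L.inf.commute[of "\<sim>m"])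
  then have neg: "\<sim>(z \<sqinter> m) \<sqinter> m = \<sim>z \<sqinter> m" and pc: "(z \<sqinter> m)\<^sup>\<star> \<sqinter> m = z\<^sup>\<star> \<sqinter> m" for z
    by (simp_all add: neg_meet pc_meet_is_boolean[OF m])
  have "\<sim>x \<sqinter> m = \<sim>y \<sqinter> m" "x\<^sup>\<star> \<sqinter> m = y\<^sup>\<star> \<sqinter> m" "t x \<sqinter> m = t y \<sqinter> m"
    by (metis neg xy, metis pc xy, metis t_meet tm xy)
  then show "(\<sim>x, \<sim>y) \<in> meet_cong m" "(x\<^sup>\<star>, y\<^sup>\<star>) \<in> meet_cong m" "(t x, t y) \<in> meet_cong m"
    by (simp_all add: meet_cong_def)
qed

end

locale Ck_algebra = mpm_algebra A for A :: "'a mpm_ops" +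
  fixes t :: "'a \<Rightarrow> 'a" and k :: nat
  assumes Ck: "Ck_alg k A t"
begin

lemma k_pos: "1 \<le> k" and t_period: "t ^^ k = id"
  using Ck by (simp_all add: Ck_alg_def)

lemma t_meet: "t (x \<sqinter> y) = t x \<sqinter> t y"
  and t_join: "t (x \<squnion> y) = t x \<squnion> t y"
  and t_neg: "t (\<sim>x) = \<sim>t x"
  and t_pc: "t (x\<^sup>\<star>) = (t x)\<^sup>\<star>"
  and t_bot: "t \<zero> = \<zero>"
  and t_top: "t \<one> = \<one>"
  using Ck by (simp_all add: Ck_alg_def mpM_automorphism_def)

lemma t_nabla: "t (nabla A x) = nabla A (t x)"
  by (simp add: nabla_eq t_join t_neg t_pc)

lemma t_delta: "t (delta A x) = delta A (t x)"
  by (simp add: delta_def t_nabla t_neg)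

lemma funpow_t_delta: "(t ^^ j) (delta A x) = delta A ((t ^^ j) x)"
  by (induction j) (simp_all add: t_delta)

lemma funpow_t_top: "(t ^^ j) \<one> = \<one>"
  by (induction j) (simp_all add: t_top)

lemma t_big_meet: "t (big_meet A f n) = big_meet A (\<lambda>j. t (f j)) n"
  by (induction n) (simp_all add: t_meet t_top)

definition delta_orbit_meet :: "'a \<Rightarrow> 'a" where
  "delta_orbit_meet a = big_meet A (\<lambda>j. (t ^^ j) (delta A a)) k"

lemma is_boolean_delta_orbit_meet: "is_boolean (delta_orbit_meet a)"
  unfolding delta_orbit_meet_def
  by (intro is_boolean_big_meet) (simp add: funpow_t_delta is_boolean_delta)

lemma t_delta_orbit_meet: "t (delta_orbit_meet a) = delta_orbit_meet a"
proof -
  obtain n where n: "k = Suc n" using k_pos by (cases k) auto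
  define f where "f j = (t ^^ j) (delta A a)" for j
  have "f (Suc k) = f 1"
    unfolding f_def by (simp add: t_period funpow_Suc_right del: funpow.simps)
  have "t (delta_orbit_meet a) = big_meet A (\<lambda>j. f (Suc j)) k"
    unfolding delta_orbit_meet_def t_big_meet f_def by simp
  also have "\<dots> = big_meet A (\<lambda>j. f (Suc j)) n \<sqinter> f 1"
    using n \<open>f (Suc k) = f 1\<close> by simp
  also have "\<dots> = big_meet A f k"
    unfolding big_meet_rotate n ..
  finally show ?thesis unfolding delta_orbit_meet_def f_def .
qed

lemma delta_orbit_meet_eq_topD: "delta_orbit_meet a = \<one> \<Longrightarrow> a = \<one>"
proof -
  assume "delta_orbit_meet a = \<one>"
  moreover have "delta_orbit_meet a \<preceq> (t ^^ k) (delta A a)"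
    unfolding delta_orbit_meet_def using k_pos by (intro big_meet_le) simp_all
  ultimately have "delta A a = \<one>" using t_period by (simp add: L.top_unique)
  then show "a = \<one>" by (rule delta_eq_topD)
qed

lemma delta_orbit_meet_in_K_set: "delta_orbit_meet a \<in> K_set A t"
  unfolding K_set_def
  using t_delta_orbit_meet nabla_is_boolean[OF is_boolean_delta_orbit_meet] by simp

lemma delta_orbit_meet_K_set: "x \<in> K_set A t \<Longrightarrow> delta_orbit_meet x = x"
proof -
  assume "x \<in> K_set A t"
  then have tx: "t x = x" and boolean: "is_boolean x"
    unfolding K_set_def by (auto, metis is_boolean_nabla)
  have "(t ^^ j) x = x" for j by (induction j) (simp_all add: tx)
  then show ?thesis
    unfolding delta_orbit_meet_def delta_is_boolean[OF boolean]
    using big_meet_const[OF k_pos] by simp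
qed

lemma bot_top_subset_K_set: "{\<zero>, \<one>} \<subseteq> K_set A t"
  unfolding K_set_def
  using nabla_is_boolean[OF is_boolean_bot] nabla_is_boolean[OF is_boolean_top] t_bot t_top
  by simp

lemma delta_orbit_meets_bot_iff_K_set:
  "(\<forall>a. a \<noteq> \<one> \<longrightarrow> delta_orbit_meet a = \<zero>) \<longleftrightarrow> K_set A t = {\<zero>, \<one>}"
proof
  assume orbit: "\<forall>a. a \<noteq> \<one> \<longrightarrow> delta_orbit_meet a = \<zero>"
  have "x \<in> {\<zero>, \<one>}" if "x \<in> K_set A t" for x
    using orbit delta_orbit_meet_K_set[OF that] by auto
  with bot_top_subset_K_set show "K_set A t = {\<zero>, \<one>}" by blast
next
  assume "K_set A t = {\<zero>, \<one>}"
  then show "\<forall>a. a \<noteq> \<one> \<longrightarrow> delta_orbit_meet a = \<zero>"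
    using delta_orbit_meet_in_K_set delta_orbit_meet_eq_topD by blast
qed

lemma delta_orbit_meets_bot_if_simple:
  assumes "Ck_simple A t" and "a \<noteq> \<one>"
  shows "delta_orbit_meet a = \<zero>"
proof -
  let ?m = "delta_orbit_meet a"
  have "Ck_congruence A t (meet_cong ?m)"
    using is_boolean_delta_orbit_meet t_delta_orbit_meet t_meet by (rule Ck_congruence_meet_cong)
  with assms(1) have "meet_cong ?m = Id \<or> meet_cong ?m = UNIV"
    unfolding Ck_simple_def by blast
  moreover have "(?m, \<one>) \<in> meet_cong ?m" by (simp add: meet_cong_def)
  moreover have "?m \<noteq> \<one>" using assms(2) delta_orbit_meet_eq_topD by blast
  ultimately have "(\<zero>, \<one>) \<in> meet_cong ?m" by auto
  then show ?thesis by (simp add: meet_cong_def)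
qed

lemma simple_if_delta_orbit_meets_bot:
  assumes orbit: "\<forall>a. a \<noteq> \<one> \<longrightarrow> delta_orbit_meet a = \<zero>" and "\<zero> \<noteq> \<one>"
  shows "Ck_simple A t"
  unfolding Ck_simple_def
proof (intro conjI allI impI)
  show "\<exists>x y :: 'a. x \<noteq> y" using \<open>\<zero> \<noteq> \<one>\<close> by blast
  fix \<theta> assume cong: "Ck_congruence A t \<theta>"
  show "\<theta> = Id \<or> \<theta> = UNIV"
  proof (cases "\<theta> = Id")
    case False
    then obtain p q where pq: "is_boolean p" "is_boolean q" "p \<preceq> q" "p \<noteq> q" "(p, q) \<in> \<theta>"
      using Ck_congruence_boolean_pair[OF cong] by blast
    define e where "e = p \<squnion> \<sim>q"
    have "e \<noteq> \<one>" unfolding e_def using pq(1-4) by (rule boolean_less_join_neg_ne_top)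
    have "(e, q \<squnion> \<sim>q) \<in> \<theta>"
      unfolding e_def using pq(5) Ck_congruence_refl[OF cong] by (rule Ck_congruence_jn[OF cong])
    then have "(e, \<one>) \<in> \<theta>" using pq(2) by (simp add: is_boolean_def)
    then have "(delta A e, \<one>) \<in> \<theta>"
      using Ck_congruence_delta[OF cong] delta_is_boolean[OF is_boolean_top] by metis
    then have "((t ^^ j) (delta A e), \<one>) \<in> \<theta>" for j
      using Ck_congruence_funpow[OF cong, of _ _ j] by (metis funpow_t_top)
    then have "(delta_orbit_meet e, big_meet A (\<lambda>j. \<one>) k) \<in> \<theta>"
      unfolding delta_orbit_meet_def by (rule Ck_congruence_big_meet[OF cong])
    then have "(\<zero>, \<one>) \<in> \<theta>"
      using orbit \<open>e \<noteq> \<one>\<close> big_meet_const[OF k_pos] by simp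
    with Ck_congruence_UNIV_if_bot_top[OF cong] show ?thesis by blast
  qed simp
qed

end

theorem theorem4p5:
  fixes A :: "'a mpm_ops" and t :: "'a \<Rightarrow> 'a" and k :: nat
  assumes "k \<ge> 1" and "Ck_alg k A t" and "bt A \<noteq> tp A"
  shows "(Ck_simple A t \<longleftrightarrow>
            (\<forall>a. a \<noteq> tp A \<longrightarrow> big_meet A (\<lambda>j. (t ^^ j) (delta A a)) k = bt A))
       \<and> ((\<forall>a. a \<noteq> tp A \<longrightarrow> big_meet A (\<lambda>j. (t ^^ j) (delta A a)) k = bt A)
            \<longleftrightarrow> K_set A t = {bt A, tp A})"
proof -
  interpret Ck_algebra A t k
    using assms(2) by unfold_locales (simp_all add: Ck_alg_def)
  have "Ck_simple A t \<longleftrightarrow> (\<forall>a. a \<noteq> \<one> \<longrightarrow> delta_orbit_meet a = \<zero>)"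
    using delta_orbit_meets_bot_if_simple simple_if_delta_orbit_meets_bot[OF _ assms(3)] by blast
  with delta_orbit_meets_bot_iff_K_set show ?thesis
    unfolding delta_orbit_meet_def by simp
qed

end
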